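(* Let $X$ be a compact Hausdorff space with a continuous injective right action of $P$ such that $X\rtimes P$ admits a Haar system, and put $X_0:=X\,Int(P)=\{xb:x\in X,\ b\in Int(P)\}$. Let $a\in P$ and let $(U_n)$ be a decreasing sequence of open subsets of $G$ with $\bigcap_n U_n=\{a\}$ such that every open $U\ni a$ contains $U_n$ for all large $n$. For each $n$ choose $f_n\in C_c(G)$ with $f_n\ge 0$, $\int f_n(g)\,dg=1$ and $\mathrm{supp}(f_n)\subset U_n\cap Int(P)a$ (this set is nonempty), and define $F_n\in C(X)$ by $F_n(x)=\int f_n(g)1_{Q_x}(g^{-1})\,dg$. Then $F_n$ converges pointwise on $X$ to the indicator function $1_{X_0a}$ of $X_0a=\{ya:y\in X_0\}$.
   Context: Standing assumptions: $G$ is a second countable locally compact group with left Haar measure $dg$; $P\subset G$ is a closed subsemigroup with identity $e\in P$, such that $G=PP^{-1}$ and the interior $Int(P)$ of $P$ is dense in $P$. Semidirect product groupoid: for a compact Hausdorff space $X$ with a continuous right action of $P$ such that each $x\mapsto xa$ is injective, $X\rtimes P:=\{(x,g)\in X\times G:\exists a,b\in P,\ y\in X \text{ with } g=ab^{-1},\ xa=yb\}$ (the point $y$ is then unique; write $(x,g,y)$), with the subspace topology of $X\times G$, product $(x,g,y)(y,h,z)=(x,gh,z)$ and inverse $(x,g,y)^{-1}=(y,g^{-1},x)$. For $x\in X$, $Q_x:=\{g\in G:(x,g)\in X\rtimes P\}$ and $\lambda^x$ is the measure with $\int\phi\,d\lambda^x=\int\phi(x,g)1_{Q_x}(g)\,dg$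 for $\phi\in C_c(X\rtimes P)$. "$X\rtimes P$ admits a Haar system" means $(\lambda^x)_{x\in X}$ is a Haar system, i.e. $x\mapsto\int\phi\,d\lambda^x$ is continuous for all $\phi\in C_c(X\rtimes P)$. *)

theory Defs
  imports "HOL-Analysis.Analysis"
begin

text \<open>Group G is a type of class topological_group_add (NOT assumed commutative);
 the group law is written additively: g + h is the product gh, - g the inverse, 0 = e.\<close>

definition left_haar_measure :: "'g::topological_group_add measure \<Rightarrow> bool" where
  "left_haar_measure \<mu> \<longleftrightarrow>
     sets \<mu> = sets borel \<and>
     (\<forall>g A. A \<in> sets borel \<longrightarrow> emeasure \<mu> ((\<lambda>h. g + h) ` A) = emeasure \<mu> A) \<and>
     (\<forall>K. compact K \<longrightarrow> emeasure \<mu> K < \<infinity>) \<and>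
     (\<forall>U. open U \<and> U \<noteq> {} \<longrightarrow> emeasure \<mu> U > 0)"

definition standing_semigroup :: "'g::topological_group_add set \<Rightarrow> bool" where
  "standing_semigroup P \<longleftrightarrow> closed P \<and> 0 \<in> P \<and> (\<forall>a\<in>P. \<forall>b\<in>P. a + b \<in> P) \<and>
     {a + - b | a b. a \<in> P \<and> b \<in> P} = UNIV \<and> P \<subseteq> closure (interior P)"

definition injective_right_action :: "'g::topological_group_add set \<Rightarrow> ('x::topological_space \<Rightarrow> 'g \<Rightarrow> 'x) \<Rightarrow> bool" where
  "injective_right_action P act \<longleftrightarrow>
     (\<forall>x. act x 0 = x) \<and>
     (\<forall>x. \<forall>a\<in>P. \<forall>b\<in>P. act (act x a) b = act x (a + b)) \<and>
     continuous_on (UNIV \<times> P) (\<lambda>(x, a). act x a) \<and>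
     (\<forall>a\<in>P. inj (\<lambda>x. act x a))"

definition semidirect :: "'g::group_add set \<Rightarrow> ('x \<Rightarrow> 'g \<Rightarrow> 'x) \<Rightarrow> ('x \<times> 'g) set" where
  "semidirect P act = {(x, g). \<exists>a\<in>P. \<exists>b\<in>P. \<exists>y. g = a + - b \<and> act x a = act y b}"

definition Qset :: "'g::group_add set \<Rightarrow> ('x \<Rightarrow> 'g \<Rightarrow> 'x) \<Rightarrow> 'x \<Rightarrow> 'g set" where
  "Qset P act x = {g. (x, g) \<in> semidirect P act}"

definition Cc_on :: "'a::topological_space set \<Rightarrow> ('a \<Rightarrow> complex) \<Rightarrow> bool" where
  "Cc_on S \<phi> \<longleftrightarrow> continuous_on S \<phi> \<and> (\<exists>K. compact K \<and> K \<subseteq> S \<and> (\<forall>p\<in>S - K. \<phi> p = 0))"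

definition admits_haar_system :: "'g::topological_group_add measure \<Rightarrow> 'g set \<Rightarrow> ('x::topological_space \<Rightarrow> 'g \<Rightarrow> 'x) \<Rightarrow> bool" where
  "admits_haar_system \<mu> P act \<longleftrightarrow>
     (\<forall>\<phi>. Cc_on (semidirect P act) \<phi> \<longrightarrow>
        continuous_on UNIV (\<lambda>x. \<integral>g. indicator (Qset P act x) g * \<phi> (x, g) \<partial>\<mu>))"

definition support_of :: "('a::topological_space \<Rightarrow> real) \<Rightarrow> 'a set" where
  "support_of f = closure {g. f g \<noteq> 0}"

end

theory Submission
  imports Defs
begin

(* For each x the integrand f_n(g) 1_{Q_x}(g^{-1}) equals either f_n or 0,
   so F_n(x) is 1 or 0, and which case occurs is decided by pure algebra:
   - for g in P, g^{-1} lies in Q_x exactly when x lies in the image X g (lemma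
     neg_mem_Qset_iff; this uses injectivity of the action);
   - X_0 a consists of the points z(ba) with b in Int(P) (lemma mem_X0a_iff);
   - every g with f_n(g) <> 0 lies in supp(f_n), so it has the form ca with c in Int(P).
   If x is not in X_0 a, then x is in no X(ca) with c in Int(P), so F_n(x) = 0 for all n
   (lemma neg_shift_notin_Qset).  If x = z(ba) with b in Int(P), then the open neighbourhood {g. b(ga^{-1})^{-1} in Int(P)}
   of a eventually contains U_n; for g = ca in supp(f_n) we then get x = (z(bc^{-1}))(ca),
   so the integrand equals f_n and F_n(x) = 1 eventually (lemma neg_shift_in_Qset). *)

lemma nonzero_in_support_of:
  assumes "f g \<noteq> 0"
  shows "g \<in> support_of f"
  unfolding support_of_def using assms closure_subset[of "{g. f g \<noteq> 0}"] by blast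

lemma integral_mult_indicator_full:
  fixes f :: "'a \<Rightarrow> real"
  assumes "\<And>g. f g \<noteq> 0 \<Longrightarrow> h g \<in> A"
  shows "(\<integral>g. f g * indicator A (h g) \<partial>M) = integral\<^sup>L M f"
proof -
  have "(\<lambda>g. f g * indicator A (h g)) = f"
  proof
    show "f g * indicator A (h g) = f g" for g
      using assms[of g] by (cases "f g = 0") simp_all
  qed
  then show ?thesis by (simp only:)
qed

lemma integral_mult_indicator_null:
  fixes f :: "'a \<Rightarrow> real"
  assumes "\<And>g. f g \<noteq> 0 \<Longrightarrow> h g \<notin> A"
  shows "(\<integral>g. f g * indicator A (h g) \<partial>M) = 0"
proof -
  have "(\<lambda>g. f g * indicator A (h g)) = (\<lambda>g. 0)"
  proof
    show "f g * indicator A (h g) = 0" for g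
      using assms[of g] by (cases "f g = 0") simp_all
  qed
  then show ?thesis by (simp only: integral_zero)
qed

lemma standing_semigroup_add:
  "standing_semigroup P \<Longrightarrow> p \<in> P \<Longrightarrow> q \<in> P \<Longrightarrow> p + q \<in> P"
  and standing_semigroup_zero: "standing_semigroup P \<Longrightarrow> 0 \<in> P"
  unfolding standing_semigroup_def by blast+

lemma right_action_zero: "injective_right_action P act \<Longrightarrow> act x 0 = x"
  and right_action_comp:
    "injective_right_action P act \<Longrightarrow> p \<in> P \<Longrightarrow> q \<in> P \<Longrightarrow> act (act x p) q = act x (p + q)"
  and right_action_inj: "injective_right_action P act \<Longrightarrow> p \<in> P \<Longrightarrow> inj (\<lambda>x. act x p)"
  unfolding injective_right_action_def by blast+

text \<open>The arrow
  (x, g^{-1}, y) is given by x 0 = y g; conversely x p = y q with g^{-1} = p q^{-1} forces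
  q = g p, hence x p = (y g) p, and injectivity of x \<mapsto> x p gives x = y g.\<close>
lemma neg_mem_Qset_iff:
  assumes semi: "standing_semigroup P" and action: "injective_right_action P act"
    and gP: "g \<in> P"
  shows "- g \<in> Qset P act x \<longleftrightarrow> (\<exists>y. x = act y g)"
proof
  assume "- g \<in> Qset P act x"
  then obtain p q y where pq: "p \<in> P" "q \<in> P" "- g = p + - q" "act x p = act y q"
    unfolding Qset_def semidirect_def by blast
  have "q = g + p"
    using pq(3) by (metis add.assoc add.left_inverse add_minus_cancel)
  then have "act x p = act (act y g) p"
    using pq(4) right_action_comp[OF action gP pq(1)] by simp
  then have "x = act y g"
    using right_action_inj[OF action pq(1)] by (auto dest: injD)
  then show "\<exists>y. x = act y g" ..
next
  assume "\<exists>y. x = act y g"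
  then obtain y where "x = act y g" ..
  then have "act x 0 = act y g" "- g = 0 + - g"
    using right_action_zero[OF action] by simp_all
  then show "- g \<in> Qset P act x"
    unfolding Qset_def semidirect_def using standing_semigroup_zero[OF semi] gP by blast
qed

lemma mem_X0a_iff:
  assumes action: "injective_right_action P act" and aP: "a \<in> P"
  shows "x \<in> {act y a | y. y \<in> {act z b | z b. b \<in> interior P}}
           \<longleftrightarrow> (\<exists>z. \<exists>b\<in>interior P. x = act z (b + a))"
proof -
  have shift: "act (act z b) a = act z (b + a)" if "b \<in> interior P" for z b
    using right_action_comp[OF action _ aP] that interior_subset by blast
  show ?thesis
  proof
    assume "x \<in> {act y a | y. y \<in> {act z b | z b. b \<in> interior P}}"
    then obtain z b where "b \<in> interior P" "x = act (act z b) a" by blast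
    then show "\<exists>z. \<exists>b\<in>interior P. x = act z (b + a)" using shift by blast
  next
    assume "\<exists>z. \<exists>b\<in>interior P. x = act z (b + a)"
    then obtain z b where "b \<in> interior P" "x = act (act z b) a" using shift by metis
    then show "x \<in> {act y a | y. y \<in> {act z b | z b. b \<in> interior P}}" by blast
  qed
qed

lemma neg_shift_notin_Qset:
  assumes semi: "standing_semigroup P" and action: "injective_right_action P act"
    and aP: "a \<in> P" and c: "c \<in> interior P"
    and x: "x \<notin> {act y a | y. y \<in> {act z b | z b. b \<in> interior P}}"
  shows "- (c + a) \<notin> Qset P act x"
proof
  assume "- (c + a) \<in> Qset P act x"
  moreover have "c + a \<in> P"
    using standing_semigroup_add[OF semi _ aP] c interior_subset by blast
  ultimately obtain y where "x = act y (c + a)" using neg_mem_Qset_iff[OF semi action] by blast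
  then show False using x c mem_X0a_iff[OF action aP] by blast
qed

lemma neg_shift_in_Qset:
  assumes semi: "standing_semigroup P" and action: "injective_right_action P act"
    and aP: "a \<in> P" and cP: "c \<in> P" and bc: "b + - c \<in> P"
  shows "- (c + a) \<in> Qset P act (act z (b + a))"
proof -
  have caP: "c + a \<in> P" using standing_semigroup_add[OF semi cP aP] .
  have "b + - c + (c + a) = b + a" by (simp add: add.assoc[symmetric])
  then have "act z (b + a) = act (act z (b + - c)) (c + a)"
    using right_action_comp[OF action bc caP] by simp
  then show ?thesis using neg_mem_Qset_iff[OF semi action caP] by blast
qed

lemma open_neighbourhood_of_shift:
  fixes a b :: "'g::topological_group_add"
  assumes "open S" "b \<in> S"
  shows "open {g. b + - (g + - a) \<in> S}" "a \<in> {g. b + - (g + - a) \<in> S}"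
proof -
  have "continuous_on UNIV (\<lambda>g. b + - (g + - a))" by (intro continuous_intros)
  then show "open {g. b + - (g + - a) \<in> S}"
    using open_vimage[OF assms(1)] by (simp add: vimage_def)
  show "a \<in> {g. b + - (g + - a) \<in> S}" using assms(2) by simp
qed

theorem mainTheorem11:
  fixes \<mu> :: "'g::{topological_group_add, t2_space, second_countable_topology} measure"
    and P :: "'g set"
    and act :: "'x::t2_space \<Rightarrow> 'g \<Rightarrow> 'x"
    and a :: 'g
    and U :: "nat \<Rightarrow> 'g set"
    and f :: "nat \<Rightarrow> 'g \<Rightarrow> real"
  assumes Xcpt: "compact (UNIV :: 'x set)"
    and lc: "locally_compact_space (euclidean :: 'g topology)"
    and haar: "left_haar_measure \<mu>"
    and semi: "standing_semigroup P"
    and action: "injective_right_action P act"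
    and hs: "admits_haar_system \<mu> P act"
    and aP: "a \<in> P"
    and Uopen: "\<And>n. open (U n)"
    and Udec: "decseq U"
    and Uint: "(\<Inter>n. U n) = {a}"
    and Ubasis: "\<And>V. open V \<Longrightarrow> a \<in> V \<Longrightarrow> eventually (\<lambda>n. U n \<subseteq> V) sequentially"
    and fcont: "\<And>n. continuous_on UNIV (f n)"
    and fcpt: "\<And>n. compact (support_of (f n))"
    and fnonneg: "\<And>n g. f n g \<ge> 0"
    and fint: "\<And>n. integral\<^sup>L \<mu> (f n) = 1"
    and fsupp: "\<And>n. support_of (f n) \<subseteq> U n \<inter> (\<lambda>b. b + a) ` interior P"
  shows "\<forall>x. (\<lambda>n. \<integral>g. f n g * indicator (Qset P act x) (- g) \<partial>\<mu>)
             \<longlonglongrightarrow> indicator {act y a | y. y \<in> {act z b | z b. b \<in> interior P}} x"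
proof
  fix x
  let ?X0a = "{act y a | y. y \<in> {act z b | z b. b \<in> interior P}}"
  let ?F = "\<lambda>n. \<integral>g. f n g * indicator (Qset P act x) (- g) \<partial>\<mu>"
  have supp: "g \<in> U n" "\<exists>c\<in>interior P. g = c + a" if "f n g \<noteq> 0" for n g
    using fsupp[of n] nonzero_in_support_of[of "f n" g, OF that] by blast+
  show "?F \<longlonglongrightarrow> indicator ?X0a x"
  proof (cases "x \<in> ?X0a")
    case False
    then have "?F n = 0" for n
      using supp(2) neg_shift_notin_Qset[OF semi action aP]
      by (intro integral_mult_indicator_null) blast
    then show ?thesis using False by simp
  next
    case True
    then obtain z b where b: "b \<in> interior P" and x: "x = act z (b + a)"
      unfolding mem_X0a_iff[OF action aP] by blast
    have "eventually (\<lambda>n. U n \<subseteq> {g. b + - (g + - a) \<in> interior P}) sequentially"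
      using Ubasis open_neighbourhood_of_shift[OF open_interior b] by blast
    then have "eventually (\<lambda>n. ?F n = 1) sequentially"
    proof eventually_elim
      case (elim n)
      have "- g \<in> Qset P act x" if nz: "f n g \<noteq> 0" for g
      proof -
        obtain c where c: "c \<in> interior P" "g = c + a" using supp(2)[OF nz] by blast
        have "g + - a = c" using c(2) by (simp add: add.assoc)
        then have "b + - c \<in> P" using elim supp(1)[OF nz] interior_subset by blast
        then show ?thesis
          using neg_shift_in_Qset[OF semi action aP] c interior_subset x by blast
      qed
      then have "?F n = integral\<^sup>L \<mu> (f n)" by (rule integral_mult_indicator_full)
      then show ?case using fint by simp
    qed
    then have "?F \<longlonglongrightarrow> 1" by (rule tendsto_eventually)
    then show ?thesis using True by simp
  qed
qed

end
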